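(* Let $n$ and $s$ be positive integers. Let $f$ be a nonzero $n$-variable Boolean function with $\deg(f)\ge s-1$, and let $D\subseteq\mathbb{F}_2^n$ be its support. Then ${FAI}(f)\ge s$ if and only if $$\mathrm{RM}(e,n)^{\overline{D}}\cap\left(\mathrm{RM}(e+n-s,n)^{\overline{D}}\right)^{\perp}=\{\mathbf 0\}$$ holds for every integer $e$ with $1\le e\le n$.
   Context: An $n$-variable Boolean function is a map $\mathbb{F}_2^n\to\mathbb{F}_2$; its algebraic degree $\deg$ is the degree of its algebraic normal form (its unique representation as a multilinear polynomial over $\mathbb{F}_2$). The support of $f$ is $\{x: f(x)=1\}$ and $wt(f)$ is its size. ${AN}^c(f)$ denotes the set of $n$-variable Boolean functions $g$ with $f\cdot g\neq 0$ (pointwise product). The fast algebraic immunity ${FAI}(f)$ is the minimum of $\deg(g)+\deg(f\cdot g)$ over all $g\in{AN}^c(f)$ with $g\neq 1$. For an integer $r$, the Reed–Muller code $\mathrm{RM}(r,n)\subseteq\mathbb{F}_2^{\mathbb{F}_2^n}$ is the set of value vectors $(h(x))_{x\in\mathbb{F}_2^n}$ of $n$-variable Boolean functions $h$ with $\deg(h)\le r$ (so for $r\ge n$ it is the whole space). For a code $\mathcal C$ with coordinates indexed by a set $X$ and a subset $E\subseteq X$, the punctured code $\mathcal C^{E}$ is obtained by deleting the coordinates in $E$ from every codeword; $\overline{D}=\mathbb{F}_2^n\setminus D$, so $\mathrm{RM}(r,n)^{\overline D}=\{(h(x))_{x\in D}:\deg h\le r\}\subseteq\mathbb{F}_2^{D}$.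 The dual $\mathcal C^\perp$ is with respect to the standard (Euclidean) inner product on $\mathbb{F}_2^{D}$. *)

theory Defs
  imports Main
begin

text \<open>Variables are indexed by a finite type 'n, with n = CARD('n).
  A point of F_2^n is a map 'n \<Rightarrow> bool (True = 1), and an n-variable
  Boolean function is a map ('n \<Rightarrow> bool) \<Rightarrow> bool.  Addition in F_2 is
  exclusive or, multiplication is conjunction.\<close>

type_synonym 'n bfun = "('n \<Rightarrow> bool) \<Rightarrow> bool"

text \<open>Coefficient of the monomial prod_{i in S} x_i in the algebraic normal form
  (Moebius transform): a_S = sum over x with supp x \<subseteq> S of f x  (mod 2).\<close>
definition anf_coeff :: "'n bfun \<Rightarrow> 'n set \<Rightarrow> bool" where
  "anf_coeff f S = odd (card {x. (\<forall>i. x i \<longrightarrow> i \<in> S) \<and> f x})"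

definition deg :: "('n::finite) bfun \<Rightarrow> nat" where
  "deg f = Max (insert 0 {card S | S. anf_coeff f S})"

definition bsupp :: "'n bfun \<Rightarrow> ('n \<Rightarrow> bool) set" where
  "bsupp f = {x. f x}"

definition ANc :: "'n bfun \<Rightarrow> 'n bfun set" where
  "ANc f = {g. (\<lambda>x. f x \<and> g x) \<noteq> (\<lambda>x. False)}"

definition FAI :: "('n::finite) bfun \<Rightarrow> nat" where
  "FAI f = Min {deg g + deg (\<lambda>x. f x \<and> g x) | g. g \<in> ANc f \<and> g \<noteq> (\<lambda>x. True)}"

text \<open>Reed-Muller code RM(r,n) as a set of value vectors (functions on F_2^n) of
  functions of degree at most r (r an integer; for r < 0 only the zero function,
  every ANF coefficient of which vanishes).\<close>
definition RM :: "int \<Rightarrow> ('n::finite) bfun set" where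
  "RM r = {h. \<forall>S. anf_coeff h S \<longrightarrow> int (card S) \<le> r}"

text \<open>Vectors of F_2^D are represented as functions F_2^n \<rightarrow> bool vanishing off D.
  Puncturing C on the complement of D = restricting codewords to D.\<close>
definition punct_to :: "('n \<Rightarrow> bool) set \<Rightarrow> 'n bfun set \<Rightarrow> 'n bfun set" where
  "punct_to D C = {(\<lambda>x. x \<in> D \<and> c x) | c. c \<in> C}"

definition dual_in :: "('n \<Rightarrow> bool) set \<Rightarrow> 'n bfun set \<Rightarrow> 'n bfun set" where
  "dual_in D C = {v. (\<forall>x. x \<notin> D \<longrightarrow> \<not> v x) \<and>
                     (\<forall>c\<in>C. even (card {x\<in>D. v x \<and> c x}))}"

end

theory Submission
  imports Defs
begin

text \<open>The proof rests on Reed-Muller duality. By Moebius inversion, a word v has inner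
  product a_S(v), its ANF coefficient at S, with the indicator of the subcube
  {x. supp x \<subseteq> S}, a function of degree n - |S|; and u c has even weight whenever
  deg u + deg c < n. Together these show that the dual of RM(t,n) punctured to D consists of the
  words of RM(n-1-t,n) vanishing off D. A nonzero word in the intersection for e is therefore a
  product f g with deg g \<le> e and deg(f g) \<le> s-1-e, i.e. a witness of FAI(f) < s; conversely a
  witness g gives such a word for e = deg g. The word f itself, coming from g = 1 (which the
  definition of FAI excludes), is ruled out by deg f \<ge> s-1 and e \<ge> 1.\<close>

lemma card_supersets_within:
  assumes "finite X" "A \<subseteq> X"
  shows "card {S. A \<subseteq> S \<and> S \<subseteq> X} = 2 ^ card (X - A)"
proof -
  have "{S. A \<subseteq> S \<and> S \<subseteq> X} = (\<union>) A ` Pow (X - A)"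
  proof
    show "{S. A \<subseteq> S \<and> S \<subseteq> X} \<subseteq> (\<union>) A ` Pow (X - A)"
    proof
      fix S
      assume "S \<in> {S. A \<subseteq> S \<and> S \<subseteq> X}"
      then have "S = A \<union> (S - A)" "S - A \<in> Pow (X - A)"
        by auto
      then show "S \<in> (\<union>) A ` Pow (X - A)"
        by blast
    qed
  qed (use assms(2) in auto)
  moreover have "inj_on ((\<union>) A) (Pow (X - A))"
    by (auto simp: inj_on_def)
  ultimately show ?thesis
    using assms(1) by (simp add: card_image card_Pow)
qed

lemma card_Collect_points: "card {x. P (Collect x)} = card {S. P S}"
proof -
  have "bij_betw Collect {x. P (Collect x)} {S. P S}"
    by (rule bij_betw_byWitness[where f' = "\<lambda>S i. i \<in> S"]) auto
  then show ?thesis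
    by (rule bij_betw_same_card)
qed

lemma card_points_above:
  fixes U :: "'n::finite set"
  shows "card {x. U \<subseteq> Collect x} = 2 ^ (card (UNIV :: 'n set) - card U)"
  using card_Collect_points[of "\<lambda>S. U \<subseteq> S"] card_supersets_within[of UNIV U]
  by (simp add: card_Diff_subset)

lemma card_points_below:
  fixes W :: "'n::finite set"
  shows "card {x. Collect x \<subseteq> W} = 2 ^ card W"
  using card_Collect_points[of "\<lambda>S. S \<subseteq> W"] by (simp add: card_Pow flip: Pow_def)

lemma even_card_odd_incidences_swap:
  assumes "finite A" "finite B"
  shows "even (card {a\<in>A. odd (card {b\<in>B. R a b})}) \<longleftrightarrow>
         even (card {b\<in>B. odd (card {a\<in>A. R a b})})"
proof -
  have "(\<Sum>a\<in>A. \<Sum>b\<in>B. of_bool (R a b) :: nat) = (\<Sum>b\<in>B. \<Sum>a\<in>A. of_bool (R a b))"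
    by (rule sum.swap)
  then have "(\<Sum>a\<in>A. card {b\<in>B. R a b}) = (\<Sum>b\<in>B. card {a\<in>A. R a b})"
    using assms by (simp add: Int_def)
  then show ?thesis
    using assms by (simp flip: even_sum_iff)
qed

lemma anf_coeff_def':
  "anf_coeff f S \<longleftrightarrow> odd (card {x. Collect x \<subseteq> S \<and> f x})"
  by (simp add: anf_coeff_def subset_iff)

lemma anf_inversion:
  fixes f :: "('n::finite) bfun"
  shows "f x \<longleftrightarrow> odd (card {S. S \<subseteq> Collect x \<and> anf_coeff f S})"
proof -
  define X where "X = Collect x"
  have coeffs: "{S. S \<subseteq> X \<and> anf_coeff f S} =
      {S \<in> Pow X. odd (card {y \<in> UNIV. Collect y \<subseteq> S \<and> f y})}"
    by (auto simp: anf_coeff_def')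
  have "odd (card {S \<in> Pow X. Collect y \<subseteq> S \<and> f y}) \<longleftrightarrow> f y \<and> y = x" for y
  proof (cases "f y \<and> Collect y \<subseteq> X")
    case True
    then have "card {S \<in> Pow X. Collect y \<subseteq> S \<and> f y} = 2 ^ card (X - Collect y)"
      using card_supersets_within[of X "Collect y"] by (simp add: conj_commute)
    with True show ?thesis
      by (auto simp: X_def Diff_eq_empty_iff dest: Collect_inj)
  next
    case False
    then have no_S: "{S \<in> Pow X. Collect y \<subseteq> S \<and> f y} = {}"
      by auto
    have "\<not> (f y \<and> y = x)"
      using False X_def by blast
    then show ?thesis
      unfolding no_S by simp
  qed
  then have "{y \<in> UNIV. odd (card {S \<in> Pow X. Collect y \<subseteq> S \<and> f y})} = {y. f y \<and> y = x}"
    by blast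
  then have "even (card {S. S \<subseteq> X \<and> anf_coeff f S}) \<longleftrightarrow> even (card {y. f y \<and> y = x})"
    using even_card_odd_incidences_swap[of "Pow X" UNIV "\<lambda>S y. Collect y \<subseteq> S \<and> f y"]
    by (simp only: coeffs) simp
  also have "{y. f y \<and> y = x} = (if f x then {x} else {})"
    by auto
  finally show ?thesis
    by (cases "f x") (simp_all add: X_def)
qed

lemma anf_coeff_zero [simp]: "\<not> anf_coeff (\<lambda>x. False) S"
  by (simp add: anf_coeff_def)

lemma ex_anf_coeff_if_nonzero:
  fixes h :: "('n::finite) bfun"
  assumes "h \<noteq> (\<lambda>x. False)"
  obtains S where "anf_coeff h S"
proof -
  obtain x where "h x"
    using assms by auto
  then have "odd (card {S. S \<subseteq> Collect x \<and> anf_coeff h S})"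
    using anf_inversion[of h x] by simp
  then have "{S. S \<subseteq> Collect x \<and> anf_coeff h S} \<noteq> {}"
    by (rule odd_card_imp_not_empty)
  then show ?thesis
    using that by blast
qed

lemma card_le_deg:
  fixes h :: "('n::finite) bfun"
  assumes "anf_coeff h S"
  shows "card S \<le> deg h"
  unfolding deg_def using assms by (intro Max_ge) auto

lemma deg_le_iff:
  fixes h :: "('n::finite) bfun"
  shows "deg h \<le> d \<longleftrightarrow> (\<forall>S. anf_coeff h S \<longrightarrow> card S \<le> d)"
  unfolding deg_def by (subst Max_le_iff) auto

lemma deg_le_card_UNIV:
  fixes h :: "('n::finite) bfun"
  shows "deg h \<le> card (UNIV :: 'n set)"
  by (simp add: deg_le_iff card_mono)

lemma deg_pos_if_nonconstant:
  fixes h :: "('n::finite) bfun"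
  assumes "h \<noteq> (\<lambda>x. False)" "h \<noteq> (\<lambda>x. True)"
  shows "0 < deg h"
proof (rule ccontr)
  assume "\<not> 0 < deg h"
  then have "{S. S \<subseteq> Collect x \<and> anf_coeff h S} = (if anf_coeff h {} then {{}} else {})" for x
    by (auto simp: deg_le_iff[of h 0, simplified])
  then have "h x = anf_coeff h {}" for x
    using anf_inversion[of h x] by simp
  then have "h = (\<lambda>x. anf_coeff h {})"
    by blast
  with assms show False
    by (cases "anf_coeff h {}") auto
qed

lemma mem_RM_iff:
  fixes h :: "('n::finite) bfun"
  shows "h \<in> RM r \<longleftrightarrow> h = (\<lambda>x. False) \<or> int (deg h) \<le> r"
proof
  assume h: "h \<in> RM r"
  show "h = (\<lambda>x. False) \<or> int (deg h) \<le> r"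
  proof (cases "h = (\<lambda>x. False)")
    case False
    then obtain S where "anf_coeff h S"
      by (rule ex_anf_coeff_if_nonzero)
    with h have "0 \<le> r"
      unfolding RM_def by fastforce
    moreover have "deg h \<le> nat r"
      using h by (auto simp: deg_le_iff RM_def)
    ultimately show ?thesis
      by linarith
  qed simp
next
  assume "h = (\<lambda>x. False) \<or> int (deg h) \<le> r"
  then show "h \<in> RM r"
    using card_le_deg[of h] by (fastforce simp: RM_def)
qed

lemma RM_mono: "r \<le> r' \<Longrightarrow> RM r \<subseteq> RM r'"
  by (auto simp: RM_def)

lemma anf_coeff_subcube_indicator:
  fixes S T :: "'n::finite set"
  shows "anf_coeff (\<lambda>x. Collect x \<subseteq> S) T \<longleftrightarrow> T \<inter> S = {}"
proof -
  have "{x. Collect x \<subseteq> T \<and> Collect x \<subseteq> S} = {x. Collect x \<subseteq> T \<inter> S}"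
    by auto
  then have "anf_coeff (\<lambda>x. Collect x \<subseteq> S) T \<longleftrightarrow> odd ((2::nat) ^ card (T \<inter> S))"
    by (simp only: anf_coeff_def' card_points_below)
  then show ?thesis
    by simp
qed

lemma subcube_indicator_in_RM:
  fixes S :: "'n::finite set"
  shows "(\<lambda>x. Collect x \<subseteq> S) \<in> RM (int (card (UNIV :: 'n set)) - int (card S))"
  unfolding RM_def
proof (intro CollectI allI impI)
  fix T
  assume "anf_coeff (\<lambda>x. Collect x \<subseteq> S) T"
  then have "T \<subseteq> - S"
    by (auto simp: anf_coeff_subcube_indicator)
  then have "card T \<le> card (- S)"
    by (simp add: card_mono)
  also have "card (- S) = card (UNIV :: 'n set) - card S"
    by (simp add: Compl_eq_Diff_UNIV card_Diff_subset)
  finally show "int (card T) \<le> int (card (UNIV :: 'n set)) - int (card S)"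
    using card_mono[of UNIV S] by simp
qed

lemma even_card_inter_RM:
  fixes u c :: "('n::finite) bfun"
  assumes "u \<in> RM r" "c \<in> RM t" "r + t < int (card (UNIV :: 'n set))"
  shows "even (card {x. u x \<and> c x})"
proof -
  \<comment> \<open>Count the pairs (x, (S, T)) with S \<union> T \<subseteq> supp x modulo 2 in both orders: the points
    above S \<union> T form a subcube of even size, since |S \<union> T| < n.\<close>
  define P where "P = {S. anf_coeff u S} \<times> {T. anf_coeff c T}"
  have uc: "u x \<and> c x \<longleftrightarrow> odd (card {p\<in>P. fst p \<union> snd p \<subseteq> Collect x})" for x
  proof -
    have "{p\<in>P. fst p \<union> snd p \<subseteq> Collect x} =
        {S. S \<subseteq> Collect x \<and> anf_coeff u S} \<times> {T. T \<subseteq> Collect x \<and> anf_coeff c T}"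
      by (auto simp: P_def)
    then show ?thesis
      by (simp add: card_cartesian_product anf_inversion[of u x] anf_inversion[of c x])
  qed
  have "even (card {x. fst p \<union> snd p \<subseteq> Collect x})" if "p \<in> P" for p
  proof -
    have "int (card (fst p)) \<le> r" "int (card (snd p)) \<le> t"
      using that assms(1,2) by (auto simp: P_def RM_def)
    then have "card (fst p \<union> snd p) < card (UNIV :: 'n set)"
      using card_Un_le[of "fst p" "snd p"] assms(3) by linarith
    then show ?thesis
      by (simp only: card_points_above) simp
  qed
  then have no_odd_pairs: "{p\<in>P. odd (card {x\<in>UNIV. fst p \<union> snd p \<subseteq> Collect x})} = {}"
    by auto
  have "{x. u x \<and> c x} = {x\<in>UNIV. odd (card {p\<in>P. fst p \<union> snd p \<subseteq> Collect x})}"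
    using uc by auto
  then have "even (card {x. u x \<and> c x}) \<longleftrightarrow>
      even (card {p\<in>P. odd (card {x\<in>UNIV. fst p \<union> snd p \<subseteq> Collect x})})"
    using even_card_odd_incidences_swap[of UNIV P "\<lambda>x p. fst p \<union> snd p \<subseteq> Collect x"]
    by (simp only: finite_class.finite)
  then show ?thesis
    by (simp only: no_odd_pairs) simp
qed

lemma RM_dual:
  fixes v :: "('n::finite) bfun"
  shows "(\<forall>c\<in>RM t. even (card {x. v x \<and> c x})) \<longleftrightarrow>
         v \<in> RM (int (card (UNIV :: 'n set)) - 1 - t)"
proof
  assume orth: "\<forall>c\<in>RM t. even (card {x. v x \<and> c x})"
  show "v \<in> RM (int (card (UNIV :: 'n set)) - 1 - t)"
    unfolding RM_def
  proof (intro CollectI allI impI)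
    fix S
    assume "anf_coeff v S"
    then have "odd (card {x. v x \<and> Collect x \<subseteq> S})"
      by (simp add: anf_coeff_def' conj_commute)
    with orth have "(\<lambda>x. Collect x \<subseteq> S) \<notin> RM t"
      by force
    with subcube_indicator_in_RM[of S] RM_mono
    have "\<not> int (card (UNIV :: 'n set)) - int (card S) \<le> t"
      by blast
    then show "int (card S) \<le> int (card (UNIV :: 'n set)) - 1 - t"
      by linarith
  qed
next
  assume "v \<in> RM (int (card (UNIV :: 'n set)) - 1 - t)"
  then show "\<forall>c\<in>RM t. even (card {x. v x \<and> c x})"
    using even_card_inter_RM[of v _ _ t] by force
qed

lemma dual_in_punct_to:
  "dual_in D (punct_to D C) =
     {v. (\<forall>x. x \<notin> D \<longrightarrow> \<not> v x) \<and> (\<forall>c\<in>C. even (card {x. v x \<and> c x}))}"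
proof -
  have "{x\<in>D. v x \<and> x \<in> D \<and> c x} = {x. v x \<and> c x}" if "\<forall>x. x \<notin> D \<longrightarrow> \<not> v x" for v c
    using that by blast
  then show ?thesis
    unfolding dual_in_def punct_to_def by auto
qed

lemma dual_in_punct_to_RM:
  fixes D :: "('n::finite \<Rightarrow> bool) set"
  shows "dual_in D (punct_to D (RM t)) =
     {v \<in> RM (int (card (UNIV :: 'n set)) - 1 - t). \<forall>x. x \<notin> D \<longrightarrow> \<not> v x}"
  unfolding dual_in_punct_to RM_dual by blast

lemma punct_RM_inter_dual_eq_zero_iff:
  fixes f :: "('n::finite) bfun"
  defines "n \<equiv> int (card (UNIV :: 'n set))"
  shows "punct_to (bsupp f) (RM e) \<inter> dual_in (bsupp f) (punct_to (bsupp f) (RM t)) = {\<lambda>x. False}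
     \<longleftrightarrow> (\<forall>g\<in>RM e. (\<lambda>x. f x \<and> g x) \<in> RM (n - 1 - t) \<longrightarrow> (\<lambda>x. f x \<and> g x) = (\<lambda>x. False))"
proof -
  define G where "G = {g\<in>RM e. (\<lambda>x. f x \<and> g x) \<in> RM (n - 1 - t)}"
  have punct: "punct_to (bsupp f) (RM e) = (\<lambda>g x. f x \<and> g x) ` RM e"
    by (auto simp: punct_to_def bsupp_def)
  have inter: "punct_to (bsupp f) (RM e) \<inter> dual_in (bsupp f) (punct_to (bsupp f) (RM t)) =
      (\<lambda>g x. f x \<and> g x) ` G"
    unfolding punct dual_in_punct_to_RM n_def G_def by (auto simp: bsupp_def)
  have "(\<lambda>x. False) \<in> G"
    by (simp add: G_def mem_RM_iff)
  then have "(\<lambda>g x. f x \<and> g x) ` G = {\<lambda>x. False} \<longleftrightarrow> (\<forall>g\<in>G. (\<lambda>x. f x \<and> g x) = (\<lambda>x. False))"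
    by (intro iffI ballI equalityI subsetI) auto
  then show ?thesis
    unfolding inter G_def by blast
qed

lemma FAI_ge_iff:
  fixes f :: "('n::finite) bfun"
  assumes "f \<noteq> (\<lambda>x. False)"
  shows "s \<le> FAI f \<longleftrightarrow> (\<forall>g\<in>ANc f. g \<noteq> (\<lambda>x. True) \<longrightarrow> s \<le> deg g + deg (\<lambda>x. f x \<and> g x))"
proof -
  obtain x0 where "f x0"
    using assms by auto
  have "(\<lambda>i. \<not> x0 i) \<noteq> x0"
    by (auto simp: fun_eq_iff)
  then have "(\<lambda>x. x = x0) \<noteq> (\<lambda>x. True)"
    by metis
  moreover have "(\<lambda>x. x = x0) \<in> ANc f"
    using \<open>f x0\<close> by (auto simp: ANc_def fun_eq_iff)
  ultimately have "{deg g + deg (\<lambda>x. f x \<and> g x) | g. g \<in> ANc f \<and> g \<noteq> (\<lambda>x. True)} \<noteq> {}"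
    by blast
  then show ?thesis
    unfolding FAI_def by (subst Min_ge_iff) auto
qed

lemma FAI_ge_imp_no_low_degree_products:
  fixes f :: "('n::finite) bfun"
  assumes "s \<le> FAI f" "f \<noteq> (\<lambda>x. False)" "s - 1 \<le> deg f"
    and "1 \<le> e" "g \<in> RM e" "(\<lambda>x. f x \<and> g x) \<in> RM (int s - 1 - e)"
  shows "(\<lambda>x. f x \<and> g x) = (\<lambda>x. False)"
proof (rule ccontr)
  assume nz: "(\<lambda>x. f x \<and> g x) \<noteq> (\<lambda>x. False)"
  then have deg_fg: "int (deg (\<lambda>x. f x \<and> g x)) \<le> int s - 1 - e"
    using assms(6) by (simp add: mem_RM_iff)
  show False
  proof (cases "g = (\<lambda>x. True)")
    case True
    with deg_fg assms(3,4) show False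
      by simp
  next
    case False
    have "int (deg g) \<le> e"
      using nz assms(5) by (auto simp: mem_RM_iff)
    moreover have "g \<in> ANc f"
      using nz by (simp add: ANc_def)
    with False assms(1) have "s \<le> deg g + deg (\<lambda>x. f x \<and> g x)"
      using FAI_ge_iff[OF assms(2)] by blast
    ultimately show False
      using deg_fg by linarith
  qed
qed

lemma FAI_ge_if_no_low_degree_products:
  fixes f :: "('n::finite) bfun"
  assumes "f \<noteq> (\<lambda>x. False)"
    and products: "\<And>e g. 1 \<le> e \<Longrightarrow> e \<le> int (card (UNIV :: 'n set)) \<Longrightarrow> g \<in> RM e \<Longrightarrow>
      (\<lambda>x. f x \<and> g x) \<in> RM (int s - 1 - e) \<Longrightarrow> (\<lambda>x. f x \<and> g x) = (\<lambda>x. False)"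
  shows "s \<le> FAI f"
  unfolding FAI_ge_iff[OF assms(1)]
proof (intro ballI impI)
  fix g
  assume "g \<in> ANc f" "g \<noteq> (\<lambda>x. True)"
  then have nz: "(\<lambda>x. f x \<and> g x) \<noteq> (\<lambda>x. False)"
    by (simp add: ANc_def)
  show "s \<le> deg g + deg (\<lambda>x. f x \<and> g x)"
  proof (rule ccontr)
    assume "\<not> s \<le> deg g + deg (\<lambda>x. f x \<and> g x)"
    then have "(\<lambda>x. f x \<and> g x) \<in> RM (int s - 1 - int (deg g))"
      by (simp add: mem_RM_iff)
    moreover have "0 < deg g"
      using nz \<open>g \<noteq> (\<lambda>x. True)\<close> by (intro deg_pos_if_nonconstant) auto
    moreover have "deg g \<le> card (UNIV :: 'n set)"
      by (rule deg_le_card_UNIV)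
    moreover have "g \<in> RM (int (deg g))"
      by (simp add: mem_RM_iff)
    ultimately have "(\<lambda>x. f x \<and> g x) = (\<lambda>x. False)"
      by (intro products[of "int (deg g)" g]) simp_all
    with nz show False
      by contradiction
  qed
qed

lemma FAI_ge_iff_no_low_degree_products:
  fixes f :: "('n::finite) bfun"
  assumes "f \<noteq> (\<lambda>x. False)" "s - 1 \<le> deg f"
  shows "s \<le> FAI f \<longleftrightarrow>
    (\<forall>e. 1 \<le> e \<and> e \<le> int (card (UNIV :: 'n set)) \<longrightarrow>
      (\<forall>g\<in>RM e. (\<lambda>x. f x \<and> g x) \<in> RM (int s - 1 - e) \<longrightarrow> (\<lambda>x. f x \<and> g x) = (\<lambda>x. False)))"
proof (intro iffI allI impI ballI)
  fix e g
  assume "s \<le> FAI f" "1 \<le> e \<and> e \<le> int (card (UNIV :: 'n set))" "g \<in> RM e"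
    "(\<lambda>x. f x \<and> g x) \<in> RM (int s - 1 - e)"
  then show "(\<lambda>x. f x \<and> g x) = (\<lambda>x. False)"
    using FAI_ge_imp_no_low_degree_products[OF _ assms] by blast
next
  assume "\<forall>e. 1 \<le> e \<and> e \<le> int (card (UNIV :: 'n set)) \<longrightarrow>
    (\<forall>g\<in>RM e. (\<lambda>x. f x \<and> g x) \<in> RM (int s - 1 - e) \<longrightarrow> (\<lambda>x. f x \<and> g x) = (\<lambda>x. False))"
  then show "s \<le> FAI f"
    by (intro FAI_ge_if_no_low_degree_products[OF assms(1)]) blast
qed

theorem theorem2:
  fixes f :: "('n::finite) bfun" and s :: nat
  assumes "s \<ge> 1"
    and "f \<noteq> (\<lambda>x. False)"
    and "deg f \<ge> s - 1"
    and "D = bsupp f"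
  shows "FAI f \<ge> s \<longleftrightarrow>
    (\<forall>e::int. 1 \<le> e \<and> e \<le> int (card (UNIV :: 'n set)) \<longrightarrow>
       punct_to D (RM e) \<inter> dual_in D (punct_to D (RM (e + int (card (UNIV :: 'n set)) - int s)))
         = {(\<lambda>x. False)})"
proof -
  have "int (card (UNIV :: 'n set)) - 1 - (e + int (card (UNIV :: 'n set)) - int s) = int s - 1 - e"
    for e
    by simp
  then show ?thesis
    unfolding assms(4) punct_RM_inter_dual_eq_zero_iff
    by (simp only: FAI_ge_iff_no_low_degree_products[OF assms(2,3)])
qed

end
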